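(* Let $r$ be a positive integer and $s=(r,r,\ldots,r)$ of length $n$. Then \[ d_n^s(z)=\sum_{\omega\in\mathcal{SW}(n+1,r)}z^{\mathrm{des}(\omega)}. \] Moreover, the local $h$-polynomial of the $r$-th edgewise subdivision of the $n$-simplex $2^{[n+1]}$ equals the local $h^\ast$-polynomial of the $s$-lecture hall simplex $P_n^s$.
   Context: $P_n^s=\{x\in\mathbb{R}^n:0\le x_1/s_1\le\cdots\le x_n/s_n\le1\}$; $d_n^s(z):=\ell^\ast(P_n^s;z)$ where for a lattice $d$-simplex $\Delta=\mathrm{conv}(v^{(0)},\ldots,v^{(d)})\subset\mathbb{R}^n$, $\ell^\ast(\Delta;z)=\sum_{x\in\Pi^\circ_\Delta\cap\mathbb{Z}^{n+1}}z^{x_{n+1}}$, $\Pi^\circ_\Delta=\{\sum_i\lambda_i(v^{(i)},1):0<\lambda_i<1\}$. $\mathcal{SW}(m,r)$ (Smirnoff words) is the set of strings $\omega_0\omega_1\cdots\omega_m$ with $\omega_i\in\{0,\ldots,r-1\}$, $\omega_0=\omega_m=0$, and $\omega_i\ne\omega_{i+1}$ for $0\le i<m$; $\mathrm{des}(\omega)=|\{i:\omega_i>\omega_{i+1}\}|$. The $r$-th edgewise subdivision of $2^{[n+1]}$: its vertices are the points $x\in\mathbb{Z}_{\ge0}^{n+1}$ with $x_1+\cdots+x_{n+1}=r$; with $\varphi(x)=(x_1,x_1+x_2,\ldots,x_1+\cdots+x_{n+1})$, a set $F$ of vertices is a face iff for all $x,y\in F$, $\varphi(x)-\varphi(y)\in\{0,1\}^{n+1}$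 or $\varphi(y)-\varphi(x)\in\{0,1\}^{n+1}$; a face $F$ lies over the face $\bigcup_{x\in F}\mathrm{supp}(x)$ of $2^{[n+1]}$. For a $(d-1)$-dimensional complex $\Omega$, $h(\Omega;z)=\sum_{i=0}^d f_{i-1}z^i(1-z)^{d-i}$; for a subdivision $\Omega$ of $2^V$, $|V|=m$, with restrictions $\Omega_F$ to faces $F\subseteq V$ ($h(\Omega_\emptyset;z)=1$), the local $h$-polynomial is $\ell_V(\Omega_V;z)=\sum_{F\subseteq V}(-1)^{m-|F|}h(\Omega_F;z)$. *)

theory Defs
  imports Main "HOL-Computational_Algebra.Polynomial"
begin

text \<open>Points of R^n are functions nat => real vanishing outside {0..<n}
  (coordinate j here is coordinate j+1 of the paper). The sequence s is
  0-indexed: s j is the paper's s_(j+1).\<close>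

definition lecture_hall_simplex :: "nat \<Rightarrow> (nat \<Rightarrow> nat) \<Rightarrow> (nat \<Rightarrow> real) set" where
  "lecture_hall_simplex n s =
     {x. (\<forall>j\<ge>n. x j = 0) \<and> 0 \<le> x 0 / real (s 0)
        \<and> (\<forall>j. Suc j < n \<longrightarrow> x j / real (s j) \<le> x (Suc j) / real (s (Suc j)))
        \<and> x (n - 1) / real (s (n - 1)) \<le> 1}"

definition vertices_of :: "(nat \<Rightarrow> real) set \<Rightarrow> (nat \<Rightarrow> real) set" where
  "vertices_of P = {v \<in> P. \<not> (\<exists>a\<in>P. \<exists>b\<in>P. a \<noteq> b \<and>
       (\<exists>t::real. 0 < t \<and> t < 1 \<and> v = (\<lambda>j. t * a j + (1 - t) * b j)))}"

text \<open>Lattice points of the open fundamental parallelepiped of the cone over a simplex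
  with vertex set V in R^n: points x in Z^(n+1) (as functions vanishing outside {0..n},
  coordinate n being the height) of the form sum_v lambda_v (v,1) with 0 < lambda_v < 1.\<close>
definition open_par_points :: "nat \<Rightarrow> (nat \<Rightarrow> real) set \<Rightarrow> (nat \<Rightarrow> int) set" where
  "open_par_points n V =
     {x. (\<forall>j>n. x j = 0) \<and>
         (\<exists>c::(nat \<Rightarrow> real) \<Rightarrow> real. (\<forall>v\<in>V. 0 < c v \<and> c v < 1) \<and>
            (\<forall>j<n. real_of_int (x j) = (\<Sum>v\<in>V. c v * v j)) \<and>
            real_of_int (x n) = (\<Sum>v\<in>V. c v))}"

definition local_hstar :: "nat \<Rightarrow> (nat \<Rightarrow> real) set \<Rightarrow> int poly" where
  "local_hstar n \<Delta> = (\<Sum>x\<in>open_par_points n (vertices_of \<Delta>). monom 1 (nat (x n)))"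

definition lecture_hall_d :: "nat \<Rightarrow> (nat \<Rightarrow> nat) \<Rightarrow> int poly" where
  "lecture_hall_d n s = local_hstar n (lecture_hall_simplex n s)"

definition smirnoff_words :: "nat \<Rightarrow> nat \<Rightarrow> nat list set" where
  "smirnoff_words m r = {w. length w = Suc m \<and> (\<forall>i\<le>m. w ! i < r) \<and> w ! 0 = 0 \<and> w ! m = 0
        \<and> (\<forall>i<m. w ! i \<noteq> w ! Suc i)}"

definition des :: "nat list \<Rightarrow> nat" where
  "des w = card {i. Suc i < length w \<and> w ! i > w ! Suc i}"

text \<open>Vertices of the r-th edgewise subdivision of 2^[n+1]; the ground set [n+1] is
  represented as {0..n}, a vertex as a function nat => nat vanishing outside {0..n}.\<close>
definition esd_vertices :: "nat \<Rightarrow> nat \<Rightarrow> (nat \<Rightarrow> nat) set" where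
  "esd_vertices n r = {x. (\<forall>j>n. x j = 0) \<and> (\<Sum>j\<le>n. x j) = r}"

definition esd_phi :: "(nat \<Rightarrow> nat) \<Rightarrow> nat \<Rightarrow> int" where
  "esd_phi x j = (\<Sum>k\<le>j. int (x k))"

definition esd_faces :: "nat \<Rightarrow> nat \<Rightarrow> (nat \<Rightarrow> nat) set set" where
  "esd_faces n r = {F. F \<subseteq> esd_vertices n r \<and>
      (\<forall>x\<in>F. \<forall>y\<in>F. (\<forall>j\<le>n. esd_phi x j - esd_phi y j \<in> {0,1})
                   \<or> (\<forall>j\<le>n. esd_phi y j - esd_phi x j \<in> {0,1}))}"

definition supp_carrier :: "(nat \<Rightarrow> nat) set \<Rightarrow> nat set" where
  "supp_carrier F = (\<Union>x\<in>F. {j. x j \<noteq> 0})"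

definition esd_restrict :: "nat \<Rightarrow> nat \<Rightarrow> nat set \<Rightarrow> (nat \<Rightarrow> nat) set set" where
  "esd_restrict n r G = {F \<in> esd_faces n r. supp_carrier F \<subseteq> G}"

text \<open>h-polynomial of a (d-1)-dimensional complex given by its set of faces
  (including the empty face).\<close>
definition h_poly :: "nat \<Rightarrow> 'a set set \<Rightarrow> int poly" where
  "h_poly d \<Omega> = (\<Sum>i\<le>d. of_nat (card {F\<in>\<Omega>. card F = i}) * monom 1 i * [:1, -1:] ^ (d - i))"

definition local_h :: "nat set \<Rightarrow> (nat set \<Rightarrow> 'a set set) \<Rightarrow> int poly" where
  "local_h V \<Omega> = (\<Sum>G\<in>Pow V. (-1) ^ (card V - card G) * h_poly (card G) (\<Omega> G))"

definition esd_local_h :: "nat \<Rightarrow> nat \<Rightarrow> int poly" where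
  "esd_local_h n r = local_h {0..n} (esd_restrict n r)"

end

theory Submission
  imports Defs "HOL-Library.Multiset" "HOL-Computational_Algebra.Polynomial_FPS"
begin

(* All three polynomials equal the generating function, by height (a_0 + ... + a_n) / r, of the
   "box vectors" a in {1, ..., r - 1}^(n+1) with r dividing a_0 + ... + a_n.

   Smirnoff words: the partial sums of a modulo r form a Smirnoff word, every descent of which
   is a carry, so there are exactly (a_0 + ... + a_n) / r of them.

   Lecture hall simplex: for s = (r, ..., r) its vertices are the 0/r vectors (0, ..., 0, r, ..., r),
   so the interior points of the fundamental parallelepiped are the partial sums of box vectors,
   at height (a_0 + ... + a_n) / r.

   Edgewise subdivision: a multiset of t vertices spanning a face of the restriction to G is
   determined by its sum b, a lattice point supported on G with coordinate sum t r (Hermite's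
   identity recovers the chain from b). Counting these points once through the faces and once
   through division by r with remainder gives h(Omega_G) = sum of z^height over the box vectors
   supported on G; Moebius inversion over the supports then leaves exactly the box vectors with
   full support. *)

section \<open>Box vectors and prefix sums\<close>

definition box_vectors :: "nat \<Rightarrow> nat \<Rightarrow> nat set \<Rightarrow> (nat \<Rightarrow> nat) set" where
  "box_vectors n r G = {a. (\<forall>j. j \<notin> G \<longrightarrow> a j = 0) \<and> (\<forall>j. a j < r) \<and> r dvd (\<Sum>j\<le>n. a j)}"

definition open_box_vectors :: "nat \<Rightarrow> nat \<Rightarrow> nat set \<Rightarrow> (nat \<Rightarrow> nat) set" where
  "open_box_vectors n r G = {a \<in> box_vectors n r G. \<forall>j\<in>G. 0 < a j}"

definition box_height :: "nat \<Rightarrow> nat \<Rightarrow> (nat \<Rightarrow> nat) \<Rightarrow> nat" where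
  "box_height n r a = (\<Sum>j\<le>n. a j) div r"

definition height_poly :: "nat \<Rightarrow> nat \<Rightarrow> (nat \<Rightarrow> nat) set \<Rightarrow> int poly" where
  "height_poly n r A = (\<Sum>a\<in>A. monom 1 (box_height n r a))"

lemma mem_open_box_vectors_atMost:
  "a \<in> open_box_vectors n r {..n} \<longleftrightarrow>
     (\<forall>j>n. a j = 0) \<and> (\<forall>j\<le>n. 0 < a j \<and> a j < r) \<and> r dvd (\<Sum>j\<le>n. a j)"
proof -
  have "a j < r" if "\<forall>j\<le>n. 0 < a j \<and> a j < r" "\<forall>j>n. a j = 0" for j
    using that by (cases "j \<le> n") auto
  then show ?thesis
    unfolding open_box_vectors_def box_vectors_def by (auto simp: not_le)
qed

definition prefix_sum :: "(nat \<Rightarrow> nat) \<Rightarrow> nat \<Rightarrow> nat" where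
  "prefix_sum x j = (\<Sum>k\<le>j. x k)"

lemma prefix_sum_0 [simp]: "prefix_sum x 0 = x 0"
  unfolding prefix_sum_def by simp

lemma prefix_sum_Suc [simp]: "prefix_sum x (Suc j) = prefix_sum x j + x (Suc j)"
  unfolding prefix_sum_def by simp

lemma prefix_sum_mono: "i \<le> j \<Longrightarrow> prefix_sum x i \<le> prefix_sum x j"
  unfolding prefix_sum_def by (rule sum_mono2) auto

lemma prefix_sum_inject:
  assumes "\<forall>j>n. x j = 0" "\<forall>j>n. y j = 0" "\<forall>j\<le>n. prefix_sum x j = prefix_sum y j"
  shows "x = y"
proof
  fix j
  show "x j = y j"
  proof (cases "j \<le> n")
    case True
    show ?thesis
    proof (cases j)
      case (Suc i)
      then have "prefix_sum x (Suc i) = prefix_sum y (Suc i)" "prefix_sum x i = prefix_sum y i"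
        using assms(3) True by (auto simp del: prefix_sum_Suc)
      then show ?thesis using Suc by simp
    qed (use assms(3) in auto)
  qed (use assms in simp)
qed

section \<open>Smirnoff words\<close>

lemma div_add_eq_carry:
  fixes s a r :: nat
  assumes "a < r"
  shows "(s + a) div r = s div r + (if (s + a) mod r < s mod r then 1 else 0)"
proof -
  obtain q p where s: "s = q * r + p" and p: "p < r"
    using assms by (metis mod_less_divisor div_mult_mod_eq gr_implies_not0 neq0_conv)
  show ?thesis
  proof (cases "p + a < r")
    case True
    then show ?thesis using s p by (simp add: add.assoc)
  next
    case False
    have "s + a = (q + 1) * r + (p + a - r)" "p + a - r < r"
      using s p assms False by auto
    then have "(s + a) div r = q + 1" "(s + a) mod r = p + a - r"
      by (simp_all only: div_mult_self3 mod_mult_self3) simp_all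
    then show ?thesis using s p False assms by simp
  qed
qed

lemma sum_div_eq_card_carries:
  fixes a :: "nat \<Rightarrow> nat"
  assumes "\<forall>k<m. a k < r"
  shows "(\<Sum>k<m. a k) div r = card {k. k < m \<and> ((\<Sum>i<k. a i) + a k) mod r < (\<Sum>i<k. a i) mod r}"
  using assms
proof (induction m)
  case (Suc m)
  let ?carry = "\<lambda>k. ((\<Sum>i<k. a i) + a k) mod r < (\<Sum>i<k. a i) mod r"
  have "(\<Sum>k<Suc m. a k) div r = (\<Sum>k<m. a k) div r + (if ?carry m then 1 else 0)"
    using div_add_eq_carry[of "a m" r "\<Sum>k<m. a k"] Suc.prems by simp
  moreover have "{k. k < Suc m \<and> ?carry k} = (if ?carry m then insert m else id) {k. k < m \<and> ?carry k}"
    by (auto simp: less_Suc_eq)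
  ultimately show ?case using Suc by simp
qed simp

lemma mod_add_diff_cancel:
  fixes x a r :: nat
  assumes "x < r" "a < r"
  shows "((x + a) mod r + r - x) mod r = a"
  using assms by (cases "x + a < r") (auto simp: le_mod_geq)

definition partial_sum_word :: "nat \<Rightarrow> nat \<Rightarrow> (nat \<Rightarrow> nat) \<Rightarrow> nat list" where
  "partial_sum_word n r a = map (\<lambda>i. (\<Sum>k<i. a k) mod r) [0..<n + 2]"

definition word_steps :: "nat \<Rightarrow> nat \<Rightarrow> nat list \<Rightarrow> nat \<Rightarrow> nat" where
  "word_steps n r w i = (if i \<le> n then (w ! Suc i + r - w ! i) mod r else 0)"

lemma length_partial_sum_word [simp]: "length (partial_sum_word n r a) = n + 2"
  unfolding partial_sum_word_def by simp

lemma nth_partial_sum_word: "i < n + 2 \<Longrightarrow> partial_sum_word n r a ! i = (\<Sum>k<i. a k) mod r"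
  unfolding partial_sum_word_def by (simp del: upt.simps)

lemma smirnoff_wordsD:
  assumes "w \<in> smirnoff_words (Suc n) r"
  shows "length w = n + 2" "\<And>i. i \<le> Suc n \<Longrightarrow> w ! i < r" "w ! 0 = 0" "w ! Suc n = 0"
    "\<And>i. i \<le> n \<Longrightarrow> w ! i \<noteq> w ! Suc i"
  using assms unfolding smirnoff_words_def by auto

lemma partial_sum_word_in_smirnoff_words:
  assumes a: "a \<in> open_box_vectors n r {..n}"
  shows "partial_sum_word n r a \<in> smirnoff_words (Suc n) r"
proof -
  have ar: "\<forall>j\<le>n. 0 < a j \<and> a j < r" and dvd: "r dvd (\<Sum>j<Suc n. a j)"
    using a unfolding mem_open_box_vectors_atMost lessThan_Suc_atMost by auto
  have "(\<Sum>k<i. a k) mod r \<noteq> ((\<Sum>k<i. a k) + a i) mod r" if "i \<le> n" for i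
  proof
    assume "(\<Sum>k<i. a k) mod r = ((\<Sum>k<i. a k) + a i) mod r"
    then have "r dvd a i" using mod_eq_dvd_iff_nat[of "\<Sum>k<i. a k" "(\<Sum>k<i. a k) + a i" r] by simp
    then show False using ar that by (meson nat_dvd_not_less)
  qed
  moreover have "r > 0" using ar[rule_format, of 0] by simp
  ultimately show ?thesis
    using dvd unfolding smirnoff_words_def by (auto simp: nth_partial_sum_word)
qed

lemma des_partial_sum_word:
  assumes a: "a \<in> open_box_vectors n r {..n}"
  shows "des (partial_sum_word n r a) = box_height n r a"
proof -
  have "\<forall>j<Suc n. a j < r"
    using a unfolding mem_open_box_vectors_atMost by auto
  then have carries: "(\<Sum>k<Suc n. a k) div r =
      card {k. k < Suc n \<and> ((\<Sum>i<k. a i) + a k) mod r < (\<Sum>i<k. a i) mod r}"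
    by (rule sum_div_eq_card_carries)
  have "{i. Suc i < length (partial_sum_word n r a) \<and>
                     partial_sum_word n r a ! Suc i < partial_sum_word n r a ! i}
      = {k. k < Suc n \<and> ((\<Sum>i<k. a i) + a k) mod r < (\<Sum>i<k. a i) mod r}"
    by (auto simp: nth_partial_sum_word)
  then show ?thesis
    unfolding des_def box_height_def carries[unfolded lessThan_Suc_atMost] by simp
qed

lemma word_steps_partial_sum_word:
  assumes a: "a \<in> open_box_vectors n r {..n}"
  shows "word_steps n r (partial_sum_word n r a) = a"
proof
  fix i
  show "word_steps n r (partial_sum_word n r a) i = a i"
  proof (cases "i \<le> n")
    case True
    let ?s = "(\<Sum>k<i. a k) mod r"
    have ai: "a i < r" using a True unfolding mem_open_box_vectors_atMost by auto
    have "word_steps n r (partial_sum_word n r a) i = ((?s + a i) mod r + r - ?s) mod r"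
      using True by (simp add: word_steps_def nth_partial_sum_word mod_add_left_eq)
    also have "\<dots> = a i"
      using ai by (simp add: mod_add_diff_cancel)
    finally show ?thesis .
  next
    case False
    then show ?thesis using a unfolding mem_open_box_vectors_atMost word_steps_def by auto
  qed
qed

lemma word_steps_partial_sums:
  assumes w: "w \<in> smirnoff_words (Suc n) r" and i: "i \<le> Suc n"
  shows "(\<Sum>k<i. word_steps n r w k) mod r = w ! i"
  using i
proof (induction i)
  case 0
  then show ?case using smirnoff_wordsD(3)[OF w] by simp
next
  case (Suc i)
  have lt: "w ! i < r" "w ! Suc i < r" using smirnoff_wordsD(2)[OF w] Suc.prems by auto
  have "(\<Sum>k<Suc i. word_steps n r w k) mod r =
      ((\<Sum>k<i. word_steps n r w k) mod r + word_steps n r w i) mod r"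
    by (simp add: mod_add_left_eq)
  also have "\<dots> = (w ! i + (w ! Suc i + r - w ! i)) mod r"
    using Suc by (simp add: word_steps_def mod_add_right_eq)
  also have "\<dots> = w ! Suc i" using lt by simp
  finally show ?case .
qed

lemma word_steps_in_open_box_vectors:
  assumes w: "w \<in> smirnoff_words (Suc n) r"
  shows "word_steps n r w \<in> open_box_vectors n r {..n}"
proof -
  have "0 < word_steps n r w j \<and> word_steps n r w j < r" if j: "j \<le> n" for j
  proof -
    have lt: "w ! j < r" "w ! Suc j < r" and ne: "w ! j \<noteq> w ! Suc j"
      using smirnoff_wordsD(2,5)[OF w] j by auto
    have "(w ! Suc j + r - w ! j) mod r \<noteq> 0"
      using lt ne by (cases "w ! j \<le> w ! Suc j") (auto simp: le_mod_geq)
    then show ?thesis using j lt by (simp add: word_steps_def)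
  qed
  moreover have "r dvd (\<Sum>j\<le>n. word_steps n r w j)"
    using word_steps_partial_sums[OF w, of "Suc n"] smirnoff_wordsD(4)[OF w]
    by (simp add: lessThan_Suc_atMost dvd_eq_mod_eq_0)
  ultimately show ?thesis
    unfolding mem_open_box_vectors_atMost by (auto simp: word_steps_def)
qed

lemma partial_sum_word_word_steps:
  assumes w: "w \<in> smirnoff_words (Suc n) r"
  shows "partial_sum_word n r (word_steps n r w) = w"
  by (rule nth_equalityI)
     (simp_all add: smirnoff_wordsD(1)[OF w] nth_partial_sum_word word_steps_partial_sums[OF w])

lemma bij_betw_partial_sum_word:
  "bij_betw (partial_sum_word n r) (open_box_vectors n r {..n}) (smirnoff_words (Suc n) r)"
  by (rule bij_betw_byWitness[where f'="word_steps n r"])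
     (auto simp: word_steps_partial_sum_word partial_sum_word_word_steps
        partial_sum_word_in_smirnoff_words word_steps_in_open_box_vectors)

lemma smirnoff_des_poly_eq_height_poly:
  "(\<Sum>w\<in>smirnoff_words (Suc n) r. monom 1 (des w)) = height_poly n r (open_box_vectors n r {..n})"
  unfolding height_poly_def
  by (subst sum.reindex_bij_betw[OF bij_betw_partial_sum_word, symmetric])
     (auto intro: sum.cong simp: des_partial_sum_word)

section \<open>The lecture hall simplex\<close>

definition lecture_hall_vertex :: "nat \<Rightarrow> nat \<Rightarrow> nat \<Rightarrow> nat \<Rightarrow> real" where
  "lecture_hall_vertex n r k = (\<lambda>j. if k \<le> j \<and> j < n then real r else 0)"

lemma mem_lecture_hall_simplex_const:
  assumes "r > 0"
  shows "x \<in> lecture_hall_simplex n (\<lambda>_. r) \<longleftrightarrow>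
    (\<forall>j\<ge>n. x j = 0) \<and> 0 \<le> x 0 \<and> (\<forall>j. Suc j < n \<longrightarrow> x j \<le> x (Suc j)) \<and> x (n - 1) \<le> real r"
  using assms unfolding lecture_hall_simplex_def
  by (auto simp: divide_right_mono divide_le_cancel zero_le_divide_iff)

lemma lecture_hall_simplex_const_mono:
  assumes "r > 0" "x \<in> lecture_hall_simplex n (\<lambda>_. r)" "i \<le> j" "j < n"
  shows "x i \<le> x j"
  using assms(3,4)
proof (induction j)
  case (Suc j)
  then show ?case
    using assms(1,2) by (cases "i = Suc j") (auto simp: mem_lecture_hall_simplex_const intro: order_trans)
qed simp

lemma lecture_hall_simplex_const_bounds:
  assumes "r > 0" "x \<in> lecture_hall_simplex n (\<lambda>_. r)"
  shows "0 \<le> x j" "x j \<le> real r"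
proof -
  have "0 \<le> x j \<and> x j \<le> real r"
  proof (cases "j < n")
    case True
    then have "x 0 \<le> x j" "x j \<le> x (n - 1)"
      using lecture_hall_simplex_const_mono[OF assms] by auto
    then show ?thesis using assms by (simp add: mem_lecture_hall_simplex_const)
  qed (use assms in \<open>simp add: mem_lecture_hall_simplex_const\<close>)
  then show "0 \<le> x j" "x j \<le> real r" by simp_all
qed

lemma lecture_hall_simplex_const_map:
  assumes "r > 0" "x \<in> lecture_hall_simplex n (\<lambda>_. r)"
    and "mono_on {0..real r} f" "f 0 = 0" "f (real r) \<le> real r"
  shows "f \<circ> x \<in> lecture_hall_simplex n (\<lambda>_. r)"
proof -
  have "x j \<in> {0..real r}" for j
    using lecture_hall_simplex_const_bounds[OF assms(1,2)] by simp
  then have "f (x j) \<le> f (x j')" if "x j \<le> x j'" for j j'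
    using assms(3) that by (simp add: mono_onD)
  moreover have "0 \<le> f (x j)" "f (x j) \<le> real r" for j
    using assms(3-5) \<open>\<And>j. x j \<in> {0..real r}\<close>
    by (metis atLeastAtMost_iff mono_onD order.refl of_nat_0_le_iff order_trans)+
  ultimately show ?thesis
    using assms(1,2,4) by (auto simp: mem_lecture_hall_simplex_const)
qed

lemma lecture_hall_vertex_in_simplex:
  assumes "r > 0"
  shows "lecture_hall_vertex n r k \<in> lecture_hall_simplex n (\<lambda>_. r)"
  unfolding mem_lecture_hall_simplex_const[OF assms] lecture_hall_vertex_def by auto

lemma convex_comb_eq_upper_bound:
  fixes t a b c :: real
  assumes "0 < t" "t < 1" "a \<le> c" "b \<le> c" "t * a + (1 - t) * b = c"
  shows "a = c \<and> b = c"
proof -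
  have "t * (c - a) \<ge> 0" "(1 - t) * (c - b) \<ge> 0" using assms by auto
  moreover have "t * (c - a) + (1 - t) * (c - b) = 0" using assms(5) by (simp add: algebra_simps)
  ultimately have "t * (c - a) = 0" "(1 - t) * (c - b) = 0" by linarith+
  then show ?thesis using assms(1,2) by auto
qed

lemma lecture_hall_vertex_in_vertices:
  assumes r: "r > 0"
  shows "lecture_hall_vertex n r k \<in> vertices_of (lecture_hall_simplex n (\<lambda>_. r))"
proof -
  let ?P = "lecture_hall_simplex n (\<lambda>_. r)"
  have "a = b" if a: "a \<in> ?P" and b: "b \<in> ?P" and t: "0 < t" "t < 1"
     and v: "lecture_hall_vertex n r k = (\<lambda>j. t * a j + (1 - t) * b j)" for a b t
  proof
    fix j
    note bounds = lecture_hall_simplex_const_bounds[OF r a] lecture_hall_simplex_const_bounds[OF r b]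
    have "t * a j + (1 - t) * b j = lecture_hall_vertex n r k j" using v by metis
    \<comment> \<open>every coordinate of the vertex is one of the two extreme values 0 and r\<close>
    then have "t * a j + (1 - t) * b j = real r \<or> t * (- a j) + (1 - t) * (- b j) = 0"
      by (auto simp: lecture_hall_vertex_def split: if_splits)
    then show "a j = b j"
      using convex_comb_eq_upper_bound[OF t, of "a j" "real r" "b j"]
        convex_comb_eq_upper_bound[OF t, of "- a j" 0 "- b j"] bounds by auto
  qed
  then show ?thesis
    unfolding vertices_of_def using lecture_hall_vertex_in_simplex[OF r] by blast
qed

text \<open>Both maps below are increasing on [0, r], fix 0 and r, and average to the identity.\<close>

lemma lecture_hall_simplex_const_midpoint:
  fixes v :: "nat \<Rightarrow> real"
  assumes r: "r > 0" and v: "v \<in> lecture_hall_simplex n (\<lambda>_. r)"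
  defines "f \<equiv> \<lambda>y. y * (3 * r - y) / (2 * r)" and "g \<equiv> \<lambda>y. y * (r + y) / (2 * r)"
  shows "f \<circ> v \<in> lecture_hall_simplex n (\<lambda>_. r)" "g \<circ> v \<in> lecture_hall_simplex n (\<lambda>_. r)"
    and "v = (\<lambda>j. (1/2) * (f \<circ> v) j + (1 - 1/2) * (g \<circ> v) j)"
proof -
  have "mono_on {0..real r} f"
  proof (rule mono_onI)
    fix y z :: real assume "y \<in> {0..real r}" "z \<in> {0..real r}" "y \<le> z"
    then have "0 \<le> (z - y) * (3 * r - y - z)" by (intro mult_nonneg_nonneg) auto
    then have "y * (3 * r - y) \<le> z * (3 * r - z)" by (simp add: algebra_simps)
    then show "f y \<le> f z" unfolding f_def using r by (simp add: divide_right_mono)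
  qed
  then show "f \<circ> v \<in> lecture_hall_simplex n (\<lambda>_. r)"
    using r by (intro lecture_hall_simplex_const_map[OF r v]) (auto simp: f_def field_simps)
  have "mono_on {0..real r} g"
  proof (rule mono_onI)
    fix y z :: real assume "y \<in> {0..real r}" "z \<in> {0..real r}" "y \<le> z"
    then have "y * (r + y) \<le> z * (r + z)" by (intro mult_mono) auto
    then show "g y \<le> g z" unfolding g_def using r by (simp add: divide_right_mono)
  qed
  then show "g \<circ> v \<in> lecture_hall_simplex n (\<lambda>_. r)"
    using r by (intro lecture_hall_simplex_const_map[OF r v]) (auto simp: g_def field_simps)
  show "v = (\<lambda>j. (1/2) * (f \<circ> v) j + (1 - 1/2) * (g \<circ> v) j)"
    using r by (auto simp: f_def g_def field_simps)
qed

lemma vertices_lecture_hall_simplex_coord: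
  assumes r: "r > 0" and v: "v \<in> vertices_of (lecture_hall_simplex n (\<lambda>_. r))"
  shows "v j = 0 \<or> v j = real r"
proof (rule ccontr)
  let ?P = "lecture_hall_simplex n (\<lambda>_. r)"
  define f where "f = (\<lambda>y::real. y * (3 * r - y) / (2 * r))"
  define g where "g = (\<lambda>y::real. y * (r + y) / (2 * r))"
  assume "\<not> (v j = 0 \<or> v j = real r)"
  then have "v j * (2 * r - 2 * v j) \<noteq> 0" by auto
  then have "f (v j) \<noteq> g (v j)" using r by (auto simp: f_def g_def field_simps)
  then have "f \<circ> v \<noteq> g \<circ> v" by (metis comp_apply)
  moreover have "v \<in> ?P" using v unfolding vertices_of_def by blast
  note midpoint = lecture_hall_simplex_const_midpoint[OF r this, folded f_def g_def]
  ultimately have "\<exists>a\<in>?P. \<exists>b\<in>?P. a \<noteq> b \<and>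
      (\<exists>t::real. 0 < t \<and> t < 1 \<and> v = (\<lambda>i. t * a i + (1 - t) * b i))"
    by (intro bexI[of _ "f \<circ> v"] bexI[of _ "g \<circ> v"] conjI exI[of _ "1/2"]) auto
  then show False using v unfolding vertices_of_def by blast
qed

lemma vertices_lecture_hall_simplex_const:
  assumes r: "r > 0"
  shows "vertices_of (lecture_hall_simplex n (\<lambda>_. r)) = lecture_hall_vertex n r ` {..n}"
proof
  show "lecture_hall_vertex n r ` {..n} \<subseteq> vertices_of (lecture_hall_simplex n (\<lambda>_. r))"
    using lecture_hall_vertex_in_vertices[OF r] by blast
next
  show "vertices_of (lecture_hall_simplex n (\<lambda>_. r)) \<subseteq> lecture_hall_vertex n r ` {..n}"
  proof
    fix v assume v: "v \<in> vertices_of (lecture_hall_simplex n (\<lambda>_. r))"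
    then have vP: "v \<in> lecture_hall_simplex n (\<lambda>_. r)" unfolding vertices_of_def by blast
    define k where "k = (LEAST j. n \<le> j \<or> v j = real r)"
    have k: "k \<le> n" "k < n \<Longrightarrow> v k = real r"
      using LeastI[of "\<lambda>j. n \<le> j \<or> v j = real r" n] Least_le[of "\<lambda>j. n \<le> j \<or> v j = real r" n]
      unfolding k_def[symmetric] by auto
    have "v j = lecture_hall_vertex n r k j" for j
    proof (cases "j < n")
      case True
      show ?thesis
      proof (cases "k \<le> j")
        case True
        then have "v k \<le> v j" using lecture_hall_simplex_const_mono[OF r vP] \<open>j < n\<close> by simp
        then show ?thesis
          using True \<open>j < n\<close> k lecture_hall_simplex_const_bounds[OF r vP, of j]
          by (simp add: lecture_hall_vertex_def)
      next
        case False
        then have "\<not> (n \<le> j \<or> v j = real r)" unfolding k_def by (intro not_less_Least) simp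
        then have "v j \<noteq> real r" by simp
        then show ?thesis
          using False vertices_lecture_hall_simplex_coord[OF r v, of j]
          by (simp add: lecture_hall_vertex_def)
      qed
    qed (use vP r in \<open>simp add: lecture_hall_vertex_def mem_lecture_hall_simplex_const\<close>)
    then show "v \<in> lecture_hall_vertex n r ` {..n}" using k(1) by auto
  qed
qed

lemma open_par_points_image:
  assumes "inj_on v I"
  shows "x \<in> open_par_points n (v ` I) \<longleftrightarrow> (\<forall>j>n. x j = 0) \<and>
    (\<exists>c. (\<forall>k\<in>I. 0 < c k \<and> c k < 1) \<and> (\<forall>j<n. real_of_int (x j) = (\<Sum>k\<in>I. c k * v k j)) \<and>
         real_of_int (x n) = (\<Sum>k\<in>I. c k))"
  (is "_ \<longleftrightarrow> _ \<and> (\<exists>c. ?coeffs c)")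
proof -
  let ?vertex_coeffs = "\<lambda>C. (\<forall>u\<in>v ` I. 0 < C u \<and> C u < 1) \<and>
    (\<forall>j<n. real_of_int (x j) = (\<Sum>u\<in>v ` I. C u * u j)) \<and> real_of_int (x n) = (\<Sum>u\<in>v ` I. C u)"
  have reindex: "?vertex_coeffs C \<longleftrightarrow> ?coeffs (C \<circ> v)" for C
    by (simp add: sum.reindex[OF assms])
  have "?coeffs c \<longleftrightarrow> ?coeffs ((c \<circ> inv_into I v) \<circ> v)" for c
    using assms by (intro arg_cong2[where f = "(\<and>)"] ball_cong all_cong sum.cong) auto
  then have "(\<exists>C. ?vertex_coeffs C) \<longleftrightarrow> (\<exists>c. ?coeffs c)"
    unfolding reindex by blast
  then show ?thesis unfolding open_par_points_def by blast
qed

lemma inj_on_lecture_hall_vertex: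
  assumes "r > 0"
  shows "inj_on (lecture_hall_vertex n r) {..n}"
proof (rule inj_onI)
  fix k l assume "k \<in> {..n}" "l \<in> {..n}" "lecture_hall_vertex n r k = lecture_hall_vertex n r l"
  then have "lecture_hall_vertex n r k (min k l) = lecture_hall_vertex n r l (min k l)" by simp
  then show "k = l"
    using assms \<open>k \<in> {..n}\<close> \<open>l \<in> {..n}\<close>
    by (auto simp: lecture_hall_vertex_def min_def split: if_splits)
qed

lemma sum_mult_lecture_hall_vertex:
  assumes "j < n"
  shows "(\<Sum>k\<le>n. c k * lecture_hall_vertex n r k j) = real r * (\<Sum>k\<le>j. c k)"
proof -
  have "(\<Sum>k\<le>n. c k * lecture_hall_vertex n r k j) = (\<Sum>k\<le>n. if k \<le> j then c k * real r else 0)"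
    using assms by (intro sum.cong) (auto simp: lecture_hall_vertex_def)
  also have "\<dots> = (\<Sum>k\<in>{k\<in>{..n}. k \<le> j}. c k * real r)"
    by (rule sum.inter_filter[symmetric]) simp
  also have "{k\<in>{..n}. k \<le> j} = {..j}" using assms by auto
  finally show ?thesis by (simp add: sum_distrib_left mult.commute)
qed

lemma open_par_points_lecture_hall:
  assumes "r > 0"
  shows "x \<in> open_par_points n (vertices_of (lecture_hall_simplex n (\<lambda>_. r))) \<longleftrightarrow>
    (\<forall>j>n. x j = 0) \<and> (\<exists>c. (\<forall>k\<le>n. 0 < c k \<and> c k < 1) \<and>
        (\<forall>j<n. real_of_int (x j) = real r * (\<Sum>k\<le>j. c k)) \<and> real_of_int (x n) = (\<Sum>k\<le>n. c k))"
  unfolding vertices_lecture_hall_simplex_const[OF assms]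
    open_par_points_image[OF inj_on_lecture_hall_vertex[OF assms]]
  by (simp add: sum_mult_lecture_hall_vertex Ball_def)

definition box_point :: "nat \<Rightarrow> nat \<Rightarrow> (nat \<Rightarrow> nat) \<Rightarrow> nat \<Rightarrow> int" where
  "box_point n r a =
     (\<lambda>j. if j < n then int (prefix_sum a j) else if j = n then int (box_height n r a) else 0)"

lemma box_point_in_open_par_points:
  assumes r: "r > 0" and a: "a \<in> open_box_vectors n r {..n}"
  shows "box_point n r a \<in> open_par_points n (vertices_of (lecture_hall_simplex n (\<lambda>_. r)))"
proof -
  have "\<forall>k\<le>n. 0 < a k \<and> a k < r" and "r dvd (\<Sum>k\<le>n. a k)"
    using a unfolding mem_open_box_vectors_atMost by auto
  then show ?thesis
    unfolding open_par_points_lecture_hall[OF r]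
    using r by (intro conjI exI[of _ "\<lambda>k. real (a k) / real r"])
      (auto simp: box_point_def box_height_def prefix_sum_def real_of_nat_div
        simp flip: sum_divide_distrib)
qed

lemma inj_on_box_point: "inj_on (box_point n r) (open_box_vectors n r {..n})"
proof (rule inj_onI)
  fix a b assume a: "a \<in> open_box_vectors n r {..n}" and b: "b \<in> open_box_vectors n r {..n}"
    and eq: "box_point n r a = box_point n r b"
  have "prefix_sum a j = prefix_sum b j" if "j \<le> n" for j
  proof (cases "j < n")
    case True
    then show ?thesis using fun_cong[OF eq, of j] by (simp add: box_point_def)
  next
    case False
    then have "box_height n r a = box_height n r b" "j = n"
      using fun_cong[OF eq, of n] that by (simp_all add: box_point_def)
    then show ?thesis
      using a b unfolding mem_open_box_vectors_atMost box_height_def prefix_sum_def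
      by (metis dvd_div_mult_self)
  qed
  then show "a = b"
    using a b by (intro prefix_sum_inject[of n]) (auto simp: mem_open_box_vectors_atMost)
qed

lemma open_par_points_lecture_hall_prefix_sums:
  assumes r: "r > 0"
    and x: "x \<in> open_par_points n (vertices_of (lecture_hall_simplex n (\<lambda>_. r)))"
  obtains a where "\<forall>k\<le>n. 0 < a k \<and> a k < r" "\<forall>k>n. a k = 0"
    "\<forall>j<n. int (prefix_sum a j) = x j" "int (prefix_sum a n) = int r * x n"
proof -
  obtain c where c: "\<forall>k\<le>n. 0 < c k \<and> c k < 1"
    and xj: "\<forall>j<n. real_of_int (x j) = real r * (\<Sum>k\<le>j. c k)" and xn: "real_of_int (x n) = (\<Sum>k\<le>n. c k)"
    using x unfolding open_par_points_lecture_hall[OF r] by blast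
  define y where "y k = (if k < n then x k else int r * x n)" for k
  have y: "real_of_int (y k) = real r * (\<Sum>i\<le>k. c i)" if "k \<le> n" for k
    using xj xn that unfolding y_def by (cases "k < n") auto
  define d where "d k = y k - (if k = 0 then 0 else y (k - 1))" for k
  have d: "real_of_int (d k) = real r * c k" if "k \<le> n" for k
    using y[OF that] y[of "k - 1"] that unfolding d_def
    by (cases k) (auto simp: algebra_simps)
  have d_bounds: "0 < d k \<and> d k < int r" if "k \<le> n" for k
  proof -
    have "0 < real r * c k" "real r * c k < real r" using c that r by auto
    then show ?thesis using d[OF that] by linarith
  qed
  define a where "a k = (if k \<le> n then nat (d k) else 0)" for k
  have prefix: "int (prefix_sum a j) = y j" if "j \<le> n" for j
    using that
  proof (induction j)
    case (Suc j)
    then show ?case using d_bounds[OF Suc.prems] by (simp add: a_def d_def)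
  qed (use d_bounds[of 0] in \<open>simp add: a_def d_def\<close>)
  show ?thesis
  proof (rule that)
    show "\<forall>k\<le>n. 0 < a k \<and> a k < r"
    proof (intro allI impI)
      fix k assume "k \<le> n"
      then show "0 < a k \<and> a k < r" using d_bounds[OF \<open>k \<le> n\<close>] by (simp add: a_def nat_less_iff)
    qed
    show "\<forall>k>n. a k = 0" by (simp add: a_def)
    show "\<forall>j<n. int (prefix_sum a j) = x j" using prefix by (simp add: y_def)
    show "int (prefix_sum a n) = int r * x n" using prefix[of n] by (simp add: y_def)
  qed
qed

lemma box_point_surj:
  assumes r: "r > 0"
    and x: "x \<in> open_par_points n (vertices_of (lecture_hall_simplex n (\<lambda>_. r)))"
  shows "x \<in> box_point n r ` open_box_vectors n r {..n}"
proof -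
  obtain a where a: "\<forall>k\<le>n. 0 < a k \<and> a k < r" "\<forall>k>n. a k = 0"
    and xj: "\<forall>j<n. int (prefix_sum a j) = x j" and xn: "int (prefix_sum a n) = int r * x n"
    using open_par_points_lecture_hall_prefix_sums[OF r x] by blast
  have "0 \<le> x n" using xn r by (smt (verit) of_nat_0_le_iff of_nat_0_less_iff zero_le_mult_iff)
  then have sum_a: "(\<Sum>k\<le>n. a k) = r * nat (x n)"
    using xn unfolding prefix_sum_def by (metis nat_int nat_mult_distrib of_nat_0_le_iff)
  then have "a \<in> open_box_vectors n r {..n}"
    unfolding mem_open_box_vectors_atMost using a by auto
  moreover have "box_point n r a = x"
  proof
    fix j
    have "x j = 0" if "j > n"
      using x that unfolding open_par_points_lecture_hall[OF r] by blast
    then show "box_point n r a j = x j"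
      using xj sum_a r \<open>0 \<le> x n\<close> by (auto simp: box_point_def box_height_def not_less)
  qed
  ultimately show ?thesis by blast
qed

lemma lecture_hall_d_eq_height_poly:
  assumes r: "r > 0"
  shows "lecture_hall_d n (\<lambda>_. r) = height_poly n r (open_box_vectors n r {..n})"
proof -
  have "bij_betw (box_point n r) (open_box_vectors n r {..n})
          (open_par_points n (vertices_of (lecture_hall_simplex n (\<lambda>_. r))))"
    unfolding bij_betw_def
    using inj_on_box_point box_point_in_open_par_points[OF r] box_point_surj[OF r] by blast
  then show ?thesis
    unfolding lecture_hall_d_def local_hstar_def height_poly_def
    by (subst sum.reindex_bij_betw[symmetric]) (auto simp: box_point_def intro: sum.cong)
qed

section \<open>Faces of the edgewise subdivision are chains\<close>

definition esd_le :: "nat \<Rightarrow> (nat \<Rightarrow> nat) \<Rightarrow> (nat \<Rightarrow> nat) \<Rightarrow> bool" where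
  "esd_le n x y \<longleftrightarrow> (\<forall>j\<le>n. prefix_sum x j \<le> prefix_sum y j \<and> prefix_sum y j \<le> prefix_sum x j + 1)"

definition prefix_total :: "nat set \<Rightarrow> (nat \<Rightarrow> nat) \<Rightarrow> nat" where
  "prefix_total A v = (\<Sum>j\<in>A. prefix_sum v j)"

lemma esd_faces_esd_le:
  assumes "F \<in> esd_faces n r" "x \<in> F" "y \<in> F"
  shows "esd_le n x y \<or> esd_le n y x"
proof -
  have "(\<forall>j\<le>n. esd_phi x j - esd_phi y j \<in> {0,1}) \<or> (\<forall>j\<le>n. esd_phi y j - esd_phi x j \<in> {0,1})"
    using assms unfolding esd_faces_def by blast
  moreover have "esd_phi v j = int (prefix_sum v j)" for v j
    unfolding esd_phi_def prefix_sum_def by simp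
  ultimately show ?thesis unfolding esd_le_def by force
qed

lemma esd_le_prefix_total_less:
  assumes "esd_le n x y" "\<not> esd_le n y x"
  shows "prefix_total {..n} x < prefix_total {..n} y"
proof -
  obtain j where "j \<le> n" "prefix_sum x j < prefix_sum y j"
    using assms unfolding esd_le_def by force
  then show ?thesis
    using assms(1) unfolding prefix_total_def esd_le_def by (intro sum_strict_mono_ex1) auto
qed

lemma sorted_wrt_esd_le_nth:
  assumes "sorted_wrt (esd_le n) l" "i \<le> i'" "i' < length l"
  shows "esd_le n (l ! i) (l ! i')"
  using assms sorted_wrt_nth_less[of "esd_le n" l i i'] by (cases "i = i'") (auto simp: esd_le_def)

lemma esd_face_mset_chain:
  assumes M: "set_mset M \<in> esd_faces n r"
  shows "\<exists>l. mset l = M \<and> sorted_wrt (esd_le n) l"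
proof -
  obtain xs where xs: "mset xs = M" using ex_mset by blast
  define l where "l = sort_key (prefix_total {..n}) xs"
  have l: "mset l = M" unfolding l_def using xs by simp
  have sorted: "sorted (map (prefix_total {..n}) l)" unfolding l_def by simp
  have "esd_le n (l ! i) (l ! i')" if "i < i'" "i' < length l" for i i'
  proof -
    have "l ! i \<in> set_mset M" "l ! i' \<in> set_mset M"
      using that l by (metis nth_mem order.strict_trans set_mset_mset)+
    moreover have "prefix_total {..n} (l ! i) \<le> prefix_total {..n} (l ! i')"
      using sorted that by (auto simp: sorted_iff_nth_mono)
    ultimately show ?thesis
      using esd_faces_esd_le[OF M] esd_le_prefix_total_less leD by blast
  qed
  then show ?thesis using l by (auto simp: sorted_wrt_iff_nth_less)
qed

lemma sum_add_div_eq: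
  fixes x t :: nat
  assumes "t > 0"
  shows "(\<Sum>i<t. (x + i) div t) = x"
proof (induction x)
  case 0
  then show ?case by (simp add: sum.neutral)
next
  case (Suc x)
  \<comment> \<open>shifting the summation range replaces the term x div t by (x + t) div t\<close>
  have "(\<Sum>i<t. (Suc x + i) div t) = (\<Sum>i<Suc t. (x + i) div t) - x div t"
    by (simp add: sum.lessThan_Suc_shift del: sum.lessThan_Suc)
  also have "\<dots> = (\<Sum>i<t. (x + i) div t) + 1"
    using assms by simp
  finally show ?case using Suc by simp
qed

lemma zero_one_mono_eq_div:
  fixes g :: "nat \<Rightarrow> nat"
  assumes i: "i < t" and g1: "\<forall>k<t. g k \<le> 1" and g0: "g 0 = 0"
    and mono: "\<forall>k k'. k \<le> k' \<longrightarrow> k' < t \<longrightarrow> g k \<le> g k'"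
  shows "g i = ((\<Sum>k<t. g k) + i) div t"
proof (cases "g i = 1")
  case True
  have "t - i = (\<Sum>k\<in>{i..<t}. 1)" by simp
  also have "\<dots> \<le> (\<Sum>k\<in>{i..<t}. g k)"
    using mono True i by (intro sum_mono) (metis atLeastLessThan_iff)
  also have "\<dots> \<le> (\<Sum>k<t. g k)" by (rule sum_mono2) auto
  finally have lower: "t - i \<le> (\<Sum>k<t. g k)" .
  have "(\<Sum>k<t. g k) = g 0 + (\<Sum>k\<in>{1..<t}. g k)"
    using i by (metis One_nat_def lessThan_atLeast0 sum.atLeast_Suc_lessThan gr_implies_not0 neq0_conv)
  also have "\<dots> = (\<Sum>k\<in>{1..<t}. g k)" using g0 by simp
  also have "\<dots> \<le> (\<Sum>k\<in>{1..<t}. 1)" using g1 by (intro sum_mono) auto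
  finally have "(\<Sum>k<t. g k) < t" using i by simp
  then show ?thesis using lower i True by (intro div_nat_eqI[symmetric]) auto
next
  case False
  then have gi: "g i = 0" using g1 i by fastforce
  have "g k = 0" if "k \<le> i" for k using mono i gi that by (metis le_zero_eq)
  then have "(\<Sum>k<t. g k) = (\<Sum>k\<in>{i<..<t}. g k)"
    using i by (intro sum.mono_neutral_right) auto
  also have "\<dots> \<le> (\<Sum>k\<in>{i<..<t}. 1)" using g1 by (intro sum_mono) auto
  finally have "(\<Sum>k<t. g k) + i < t" using i by simp
  then show ?thesis using gi by simp
qed

lemma esd_chain_prefix_sum:
  assumes chain: "sorted_wrt (esd_le n) l" and i: "i < length l" and j: "j \<le> n"
  shows "prefix_sum (l ! i) j = ((\<Sum>k<length l. prefix_sum (l ! k) j) + i) div length l"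
proof -
  let ?t = "length l"
  define q where "q = prefix_sum (l ! 0) j"
  define g where "g k = prefix_sum (l ! k) j - q" for k
  have bounds: "q \<le> prefix_sum (l ! k) j \<and> prefix_sum (l ! k) j \<le> q + 1" if "k < ?t" for k
    using sorted_wrt_esd_le_nth[OF chain, of 0 k] that j unfolding esd_le_def q_def by auto
  have "g i = ((\<Sum>k<?t. g k) + i) div ?t"
  proof (rule zero_one_mono_eq_div[OF i])
    show "\<forall>k<?t. g k \<le> 1" using bounds unfolding g_def by fastforce
    show "g 0 = 0" unfolding g_def q_def by simp
    show "\<forall>k k'. k \<le> k' \<longrightarrow> k' < ?t \<longrightarrow> g k \<le> g k'"
      using sorted_wrt_esd_le_nth[OF chain] j unfolding g_def esd_le_def by (auto intro: diff_le_mono)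
  qed
  moreover have "(\<Sum>k<?t. prefix_sum (l ! k) j) = (\<Sum>k<?t. q + g k)"
    using bounds unfolding g_def by (intro sum.cong) auto
  then have "(\<Sum>k<?t. prefix_sum (l ! k) j) = ?t * q + (\<Sum>k<?t. g k)"
    by (simp add: sum.distrib)
  then have "((\<Sum>k<?t. prefix_sum (l ! k) j) + i) div ?t = q + ((\<Sum>k<?t. g k) + i) div ?t"
    using i by (metis add.assoc div_mult_self4 gr_implies_not0)
  ultimately show ?thesis
    using bounds[OF i] unfolding g_def by linarith
qed

section \<open>Multisets of faces and lattice points\<close>

definition vertex_sum :: "(nat \<Rightarrow> nat) multiset \<Rightarrow> nat \<Rightarrow> nat" where
  "vertex_sum M = (\<lambda>j. \<Sum>v\<in>#M. v j)"

definition face_lattice_points :: "nat \<Rightarrow> nat \<Rightarrow> nat set \<Rightarrow> nat \<Rightarrow> (nat \<Rightarrow> nat) set" where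
  "face_lattice_points n r G t = {b. (\<forall>j. j \<notin> G \<longrightarrow> b j = 0) \<and> (\<Sum>j\<le>n. b j) = t * r}"

definition face_multisets :: "nat \<Rightarrow> nat \<Rightarrow> nat set \<Rightarrow> nat \<Rightarrow> (nat \<Rightarrow> nat) multiset set" where
  "face_multisets n r G t = {M. set_mset M \<in> esd_restrict n r G \<and> size M = t}"

text \<open>The i-th vertex of the chain whose vertices sum to b has prefix sums
  \<open>(prefix_sum b j + i) div t\<close>.\<close>

definition chain_vertex :: "nat \<Rightarrow> nat \<Rightarrow> (nat \<Rightarrow> nat) \<Rightarrow> nat \<Rightarrow> nat \<Rightarrow> nat" where
  "chain_vertex n t b i = (\<lambda>j. if j \<le> n then (prefix_sum b j + i) div t -
       (if j = 0 then 0 else (prefix_sum b (j - 1) + i) div t) else 0)"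

definition chain_mset :: "nat \<Rightarrow> nat \<Rightarrow> (nat \<Rightarrow> nat) \<Rightarrow> (nat \<Rightarrow> nat) multiset" where
  "chain_mset n t b = image_mset (chain_vertex n t b) (mset_set {..<t})"

lemma sum_vertex_sum: "(\<Sum>j\<in>A. vertex_sum M j) = (\<Sum>v\<in>#M. \<Sum>j\<in>A. v j)"
  unfolding vertex_sum_def by (induction M) (simp_all add: sum.distrib)

lemma prefix_sum_chain_vertex:
  "j \<le> n \<Longrightarrow> prefix_sum (chain_vertex n t b i) j = (prefix_sum b j + i) div t"
proof (induction j)
  case (Suc j)
  have "(prefix_sum b j + i) div t \<le> (prefix_sum b (Suc j) + i) div t"
    by (intro div_le_mono add_right_mono prefix_sum_mono) simp
  then show ?case using Suc by (simp add: chain_vertex_def)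
qed (simp add: chain_vertex_def)

lemma chain_mset_vertex_sum:
  assumes M: "set_mset M \<in> esd_faces n r" and t: "size M = t" "t > 0"
  shows "chain_mset n t (vertex_sum M) = M"
proof -
  obtain l where l: "mset l = M" and chain: "sorted_wrt (esd_le n) l"
    using esd_face_mset_chain[OF M] by blast
  have len: "length l = t" using l t by (metis size_mset)
  have "l ! i = chain_vertex n t (vertex_sum M) i" if i: "i < t" for i
  proof (rule prefix_sum_inject[of n])
    have "l ! i \<in> set_mset M" using l i len by (metis nth_mem set_mset_mset)
    then have "l ! i \<in> esd_vertices n r" using M unfolding esd_faces_def by blast
    then show "\<forall>j>n. (l ! i) j = 0" unfolding esd_vertices_def by blast
    show "\<forall>j>n. chain_vertex n t (vertex_sum M) i j = 0" by (simp add: chain_vertex_def)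
    show "\<forall>j\<le>n. prefix_sum (l ! i) j = prefix_sum (chain_vertex n t (vertex_sum M) i) j"
    proof (intro allI impI)
      fix j assume j: "j \<le> n"
      have "prefix_sum (vertex_sum M) j = (\<Sum>v\<in>#mset l. prefix_sum v j)"
        unfolding prefix_sum_def sum_vertex_sum l ..
      also have "\<dots> = (\<Sum>k<t. prefix_sum (l ! k) j)"
        using len by (simp add: sum_mset_sum_list sum_list_sum_nth atLeast0LessThan flip: mset_map)
      finally show "prefix_sum (l ! i) j = prefix_sum (chain_vertex n t (vertex_sum M) i) j"
        using esd_chain_prefix_sum[OF chain, of i j] i j len by (simp add: prefix_sum_chain_vertex)
    qed
  qed
  note chain_vertices = this
  have "M = mset (map ((!) l) [0..<t])" using len l map_nth[of l] by metis
  also have "\<dots> = image_mset ((!) l) (mset_set {..<t})" by (simp add: mset_upt atLeast0LessThan)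
  also have "\<dots> = image_mset (chain_vertex n t (vertex_sum M)) (mset_set {..<t})"
    by (intro image_mset_cong) (simp add: chain_vertices)
  finally show ?thesis unfolding chain_mset_def ..
qed

lemma vertex_sum_chain_mset:
  assumes "t > 0"
  shows "vertex_sum (chain_mset n t b) j = (if j \<le> n then b j else 0)"
proof -
  have "prefix_sum (vertex_sum (chain_mset n t b)) j = prefix_sum b j" if "j \<le> n" for j
  proof -
    have "prefix_sum (vertex_sum (chain_mset n t b)) j = (\<Sum>i<t. prefix_sum (chain_vertex n t b i) j)"
      unfolding prefix_sum_def sum_vertex_sum chain_mset_def
      by (simp add: sum_unfold_sum_mset multiset.map_comp comp_def)
    also have "\<dots> = prefix_sum b j"
      using that assms by (simp add: prefix_sum_chain_vertex sum_add_div_eq)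
    finally show ?thesis .
  qed
  then have "vertex_sum (chain_mset n t b) = (\<lambda>j. if j \<le> n then b j else 0)"
    by (intro prefix_sum_inject[of n])
      (auto simp: vertex_sum_def chain_mset_def chain_vertex_def prefix_sum_def)
  then show ?thesis by simp
qed

lemma chain_vertex_in_esd_vertices:
  assumes "i < t" "(\<Sum>j\<le>n. b j) = t * r"
  shows "chain_vertex n t b i \<in> esd_vertices n r"
proof -
  have "(\<Sum>j\<le>n. chain_vertex n t b i j) = (t * r + i) div t"
    using prefix_sum_chain_vertex[of n n t b i] assms(2) unfolding prefix_sum_def by simp
  also have "\<dots> = r" using assms(1) by simp
  finally show ?thesis unfolding esd_vertices_def by (simp add: chain_vertex_def)
qed

lemma esd_phi_chain_vertex_diff:
  assumes "i' \<le> i" "i < t" "j \<le> n"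
  shows "esd_phi (chain_vertex n t b i) j - esd_phi (chain_vertex n t b i') j \<in> {0,1}"
proof -
  have "(prefix_sum b j + i') div t \<le> (prefix_sum b j + i) div t"
    using assms by (intro div_le_mono) simp
  moreover have "(prefix_sum b j + i) div t \<le> (prefix_sum b j + i' + t) div t"
    using assms by (intro div_le_mono) simp
  ultimately show ?thesis
    using prefix_sum_chain_vertex[OF assms(3)] assms
    by (auto simp: esd_phi_def prefix_sum_def simp flip: of_nat_sum)
qed

lemma chain_vertex_eq_0:
  assumes "b j = 0" "i < t"
  shows "chain_vertex n t b i j = 0"
  using assms by (cases j) (simp_all add: chain_vertex_def)

lemma chain_mset_in_face_multisets:
  assumes G: "G \<subseteq> {..n}" and t: "t > 0" and b: "b \<in> face_lattice_points n r G t"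
  shows "chain_mset n t b \<in> face_multisets n r G t"
proof -
  have "chain_vertex n t b ` {..<t} \<subseteq> esd_vertices n r"
    using b chain_vertex_in_esd_vertices unfolding face_lattice_points_def by blast
  moreover have "supp_carrier (chain_vertex n t b ` {..<t}) \<subseteq> G"
  proof
    fix j assume "j \<in> supp_carrier (chain_vertex n t b ` {..<t})"
    then obtain i where "i < t" "chain_vertex n t b i j \<noteq> 0" unfolding supp_carrier_def by auto
    then have "b j \<noteq> 0" by (metis chain_vertex_eq_0)
    then show "j \<in> G" using b by (auto simp: face_lattice_points_def)
  qed
  moreover have "(\<forall>j\<le>n. esd_phi x j - esd_phi y j \<in> {0,1}) \<or> (\<forall>j\<le>n. esd_phi y j - esd_phi x j \<in> {0,1})"
    if xy: "x \<in> chain_vertex n t b ` {..<t}" "y \<in> chain_vertex n t b ` {..<t}" for x y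
  proof -
    obtain i i' where "i < t" "i' < t" "x = chain_vertex n t b i" "y = chain_vertex n t b i'"
      using xy by blast
    then show ?thesis using esd_phi_chain_vertex_diff by (cases "i' \<le> i") auto
  qed
  ultimately have "chain_vertex n t b ` {..<t} \<in> esd_restrict n r G"
    unfolding esd_restrict_def esd_faces_def by blast
  then show ?thesis unfolding face_multisets_def chain_mset_def by simp
qed

lemma vertex_sum_in_face_lattice_points:
  assumes G: "G \<subseteq> {..n}" and M: "M \<in> face_multisets n r G t"
  shows "vertex_sum M \<in> face_lattice_points n r G t"
proof -
  have F: "set_mset M \<in> esd_restrict n r G" and size: "size M = t"
    using M unfolding face_multisets_def by auto
  have "v j = 0" if "v \<in># M" "j \<notin> G" for v j
    using F that unfolding esd_restrict_def supp_carrier_def by blast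
  moreover have "(\<Sum>j\<le>n. v j) = r" if "v \<in># M" for v
    using F that unfolding esd_restrict_def esd_faces_def esd_vertices_def by blast
  moreover have "(\<Sum>j\<le>n. vertex_sum M j) = (\<Sum>v\<in>#M. r)"
    unfolding sum_vertex_sum using \<open>\<And>v. v \<in># M \<Longrightarrow> (\<Sum>j\<le>n. v j) = r\<close>
    by (simp cong: image_mset_cong)
  ultimately show ?thesis
    using size unfolding face_lattice_points_def by (simp add: vertex_sum_def sum_mset_constant)
qed

lemma face_lattice_points_0:
  assumes "G \<subseteq> {..n}"
  shows "face_lattice_points n r G 0 = {vertex_sum {#}}"
proof (intro equalityI subsetI)
  fix b assume b: "b \<in> face_lattice_points n r G 0"
  have "b j = 0" for j
  proof (cases "j \<le> n")
    case True
    then have "b j \<le> (\<Sum>k\<le>n. b k)" by (intro member_le_sum) simp_all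
    then show ?thesis using b unfolding face_lattice_points_def by simp
  qed (use b assms in \<open>auto simp: face_lattice_points_def\<close>)
  then show "b \<in> {vertex_sum {#}}" by (simp add: vertex_sum_def fun_eq_iff)
qed (simp add: face_lattice_points_def vertex_sum_def)

lemma face_multisets_0: "face_multisets n r G 0 = {{#}}"
  unfolding face_multisets_def esd_restrict_def esd_faces_def supp_carrier_def by auto

lemma bij_betw_vertex_sum:
  assumes G: "G \<subseteq> {..n}"
  shows "bij_betw vertex_sum (face_multisets n r G t) (face_lattice_points n r G t)"
proof (cases "t = 0")
  case True
  then show ?thesis using face_lattice_points_0[OF G] face_multisets_0 by simp
next
  case False
  then have t: "t > 0" by simp
  show ?thesis
  proof (rule bij_betw_byWitness[where f'="chain_mset n t"])
    show "\<forall>M\<in>face_multisets n r G t. chain_mset n t (vertex_sum M) = M"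
      using chain_mset_vertex_sum t unfolding face_multisets_def esd_restrict_def by auto
    show "\<forall>b\<in>face_lattice_points n r G t. vertex_sum (chain_mset n t b) = b"
    proof
      fix b assume "b \<in> face_lattice_points n r G t"
      then have "b j = 0" if "\<not> j \<le> n" for j using G that unfolding face_lattice_points_def by auto
      then show "vertex_sum (chain_mset n t b) = b" using t by (auto simp: vertex_sum_chain_mset)
    qed
    show "vertex_sum ` face_multisets n r G t \<subseteq> face_lattice_points n r G t"
      using vertex_sum_in_face_lattice_points[OF G] by blast
    show "chain_mset n t ` face_lattice_points n r G t \<subseteq> face_multisets n r G t"
      using chain_mset_in_face_multisets[OF G t] by blast
  qed
qed

section \<open>Counting lattice points in two ways\<close>

lemma finite_esd_vertices: "finite (esd_vertices n r)"
proof (rule finite_subset)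
  show "esd_vertices n r \<subseteq> {f. \<forall>x. (x \<in> {..n} \<longrightarrow> f x \<in> {..r}) \<and> (x \<notin> {..n} \<longrightarrow> f x = 0)}"
    unfolding esd_vertices_def by (auto intro: member_le_sum[THEN order_trans])
  show "finite \<dots>" by (intro finite_set_of_finite_funs) simp_all
qed

lemma finite_esd_face: "F \<in> esd_restrict n r G \<Longrightarrow> finite F"
  unfolding esd_restrict_def esd_faces_def using finite_esd_vertices finite_subset by blast

lemma finite_esd_restrict: "finite (esd_restrict n r G)"
  using finite_esd_vertices
  by (rule rev_finite_subset[OF finite_Pow_iff[THEN iffD2]]) (auto simp: esd_restrict_def esd_faces_def)

lemma finite_box_vectors:
  assumes "finite G"
  shows "finite (box_vectors n r G)"
proof (rule finite_subset)
  show "box_vectors n r G \<subseteq> {f. \<forall>x. (x \<in> G \<longrightarrow> f x \<in> {..<r}) \<and> (x \<notin> G \<longrightarrow> f x = 0)}"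
    unfolding box_vectors_def by auto
  show "finite \<dots>" using assms by (intro finite_set_of_finite_funs) simp_all
qed

lemma card_multisets_with_set:
  assumes F: "finite F"
  shows "card {M. set_mset M = F \<and> size M = t} =
         (if t < card F then 0 else (card F + (t - card F) - 1) choose (t - card F))"
proof -
  have card_le: "card F \<le> size M" if "set_mset M = F" for M
    using size_mset_mono[OF mset_set_set_mset_msubset[of M]] that by simp
  show ?thesis
  proof (cases "t < card F")
    case True
    then have "{M. set_mset M = F \<and> size M = t} = {}" using card_le by fastforce
    then show ?thesis using True by (metis card.empty)
  next
    case False
    \<comment> \<open>removing one copy of every element of F\<close>
    have "bij_betw (\<lambda>M. M - mset_set F) {M. set_mset M = F \<and> size M = t}
            (multisets_of_size F (t - card F))"
    proof (rule bij_betw_byWitness[where f'="\<lambda>M. M + mset_set F"])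
      have sub: "mset_set F \<subseteq># M" if "set_mset M = F" for M
        using mset_set_set_mset_msubset[of M] that by simp
      show "\<forall>M\<in>{M. set_mset M = F \<and> size M = t}. M - mset_set F + mset_set F = M"
        using sub by (auto simp: subset_mset.diff_add)
      show "\<forall>M\<in>multisets_of_size F (t - card F). M + mset_set F - mset_set F = M" by simp
      show "(\<lambda>M. M - mset_set F) ` {M. set_mset M = F \<and> size M = t} \<subseteq> multisets_of_size F (t - card F)"
        using sub F by (auto simp: multisets_of_size_def size_Diff_submset dest: in_diffD)
      show "(\<lambda>M. M + mset_set F) ` multisets_of_size F (t - card F) \<subseteq> {M. set_mset M = F \<and> size M = t}"
        using F False by (auto simp: multisets_of_size_def)
    qed
    then show ?thesis
      using False card_multisets_of_size[OF F] by (simp add: bij_betw_same_card)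
  qed
qed

lemma card_face_multisets:
  "card (face_multisets n r G t) =
     (\<Sum>F\<in>esd_restrict n r G. if t < card F then 0 else (card F + (t - card F) - 1) choose (t - card F))"
proof -
  have "face_multisets n r G t = (\<Union>F\<in>esd_restrict n r G. {M. set_mset M = F \<and> size M = t})"
    unfolding face_multisets_def by auto
  moreover have "finite {M. set_mset M = F \<and> size M = t}" if "F \<in> esd_restrict n r G" for F
    using finite_multisets_of_size[OF finite_esd_face[OF that], of t]
    by (rule rev_finite_subset) (auto simp: multisets_of_size_def)
  ultimately have "card (face_multisets n r G t) =
      (\<Sum>F\<in>esd_restrict n r G. card {M. set_mset M = F \<and> size M = t})"
    by (simp only:) (rule card_UN_disjoint, auto simp: finite_esd_restrict)
  then show ?thesis by (simp add: card_multisets_with_set finite_esd_face cong: sum.cong)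
qed

lemma count_sum_replicate_mset:
  assumes "finite G"
  shows "count (\<Sum>j\<in>G. replicate_mset (f j) j) x = (if x \<in> G then f x else 0)"
  using assms by (simp add: count_sum)

lemma sum_replicate_mset_count:
  assumes "finite G" "set_mset C \<subseteq> G"
  shows "(\<Sum>j\<in>G. replicate_mset (count C j) j) = C"
  using assms by (intro multiset_eqI) (auto simp: count_sum_replicate_mset count_eq_zero_iff)

lemma sum_atMost_eq_sum_support:
  fixes n :: nat
  assumes "G \<subseteq> {..n}" "\<forall>j. j \<notin> G \<longrightarrow> f j = 0"
  shows "(\<Sum>j\<le>n. f j) = (\<Sum>j\<in>G. f j)"
  using assms by (intro sum.mono_neutral_right) auto

text \<open>A lattice point b splits coordinatewise into remainders modulo r, which form a box
  vector, and quotients, recorded as a multiset on G.\<close>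

definition box_decompositions ::
    "nat \<Rightarrow> nat \<Rightarrow> nat set \<Rightarrow> nat \<Rightarrow> ((nat \<Rightarrow> nat) \<times> nat multiset) set" where
  "box_decompositions n r G t =
     (SIGMA a:{a\<in>box_vectors n r G. box_height n r a \<le> t}. multisets_of_size G (t - box_height n r a))"

definition mod_div_split :: "nat \<Rightarrow> nat set \<Rightarrow> (nat \<Rightarrow> nat) \<Rightarrow> (nat \<Rightarrow> nat) \<times> nat multiset" where
  "mod_div_split r G b = (\<lambda>j. b j mod r, \<Sum>j\<in>G. replicate_mset (b j div r) j)"

definition mod_div_join :: "nat \<Rightarrow> (nat \<Rightarrow> nat) \<times> nat multiset \<Rightarrow> nat \<Rightarrow> nat" where
  "mod_div_join r aC = (\<lambda>j. fst aC j + r * count (snd aC) j)"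

lemma mod_div_split_in_box_decompositions:
  assumes G: "G \<subseteq> {..n}" and r: "r > 0" and b: "b \<in> face_lattice_points n r G t"
  shows "mod_div_split r G b \<in> box_decompositions n r G t"
proof -
  have fin: "finite G" using G finite_subset by blast
  let ?q = "\<Sum>j\<le>n. b j div r"
  have eq: "t * r = (\<Sum>j\<le>n. b j mod r) + r * ?q"
    using b unfolding face_lattice_points_def by (simp add: sum_distrib_left flip: sum.distrib)
  then have "r * ?q \<le> r * t" by (simp add: mult.commute)
  then have "?q \<le> t" using r by simp
  have sum_mod: "(\<Sum>j\<le>n. b j mod r) = r * (t - ?q)"
    using eq by (simp add: diff_mult_distrib2 mult.commute)
  have "(\<lambda>j. b j mod r) \<in> box_vectors n r G"
    using b r sum_mod unfolding face_lattice_points_def box_vectors_def by auto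
  moreover have "(\<Sum>j\<in>G. b j div r) = ?q"
    using b G unfolding face_lattice_points_def by (intro sum_atMost_eq_sum_support[symmetric]) auto
  then have "(\<Sum>j\<in>G. replicate_mset (b j div r) j) \<in> multisets_of_size G (t - (t - ?q))"
    using \<open>?q \<le> t\<close> fin unfolding multisets_of_size_def by (auto simp: set_mset_sum)
  ultimately show ?thesis
    using r sum_mod \<open>?q \<le> t\<close>
    by (auto simp: box_decompositions_def mod_div_split_def box_height_def)
qed

lemma mod_div_join_in_face_lattice_points:
  assumes G: "G \<subseteq> {..n}" and aC: "aC \<in> box_decompositions n r G t"
  shows "mod_div_join r aC \<in> face_lattice_points n r G t"
proof -
  have fin: "finite G" using G finite_subset by blast
  obtain a C where aC: "aC = (a, C)" and a: "a \<in> box_vectors n r G" "box_height n r a \<le> t"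
    and C: "set_mset C \<subseteq> G" "size C = t - box_height n r a"
    using aC by (auto simp: box_decompositions_def multisets_of_size_def)
  have "(\<Sum>j\<le>n. a j) = r * box_height n r a"
    using a unfolding box_vectors_def box_height_def by auto
  moreover have "(\<Sum>j\<le>n. count C j) = size C"
    using sum_atMost_eq_sum_support[OF G, of "count C"] C(1)
      arg_cong[OF sum_replicate_mset_count[OF fin C(1)], of size]
    by (auto simp: count_eq_zero_iff)
  ultimately have "(\<Sum>j\<le>n. a j + r * count C j) = t * r"
    using a C(2) by (simp add: sum.distrib flip: sum_distrib_left)
      (metis add_mult_distrib2 le_add_diff_inverse mult.commute)
  moreover have "\<forall>j. j \<notin> G \<longrightarrow> a j + r * count C j = 0"
    using a C(1) unfolding box_vectors_def by (auto simp: count_eq_zero_iff)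
  ultimately show ?thesis unfolding face_lattice_points_def mod_div_join_def aC by simp
qed

lemma bij_betw_mod_div_split:
  assumes G: "G \<subseteq> {..n}" and r: "r > 0"
  shows "bij_betw (mod_div_split r G) (face_lattice_points n r G t) (box_decompositions n r G t)"
proof (rule bij_betw_byWitness[where f'="mod_div_join r"])
  have fin: "finite G" using G finite_subset by blast
  show "\<forall>b\<in>face_lattice_points n r G t. mod_div_join r (mod_div_split r G b) = b"
    using fin by (auto simp: face_lattice_points_def mod_div_join_def mod_div_split_def
        count_sum_replicate_mset fun_eq_iff)
  show "\<forall>aC\<in>box_decompositions n r G t. mod_div_split r G (mod_div_join r aC) = aC"
    using r fin
    by (auto simp: box_decompositions_def box_vectors_def multisets_of_size_def mod_div_join_def
        mod_div_split_def sum_replicate_mset_count)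
  show "mod_div_split r G ` face_lattice_points n r G t \<subseteq> box_decompositions n r G t"
    using mod_div_split_in_box_decompositions[OF G r] by blast
  show "mod_div_join r ` box_decompositions n r G t \<subseteq> face_lattice_points n r G t"
    using mod_div_join_in_face_lattice_points[OF G] by blast
qed

lemma card_face_lattice_points:
  assumes G: "G \<subseteq> {..n}" and r: "r > 0"
  shows "card (face_lattice_points n r G t) = (\<Sum>a\<in>{a\<in>box_vectors n r G. box_height n r a \<le> t}.
           (card G + (t - box_height n r a) - 1) choose (t - box_height n r a))"
proof -
  have fin: "finite G" using G finite_subset by blast
  have "card (face_lattice_points n r G t) = card (box_decompositions n r G t)"
    using bij_betw_mod_div_split[OF G r] by (rule bij_betw_same_card)
  also have "\<dots> = (\<Sum>a\<in>{a\<in>box_vectors n r G. box_height n r a \<le> t}.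
      card (multisets_of_size G (t - box_height n r a)))"
    unfolding box_decompositions_def using finite_box_vectors[OF fin] fin by (intro card_SigmaI) auto
  finally show ?thesis by (simp add: card_multisets_of_size[OF fin])
qed

section \<open>The h-polynomial of a restriction\<close>

lemma esd_restrict_vertex:
  assumes "F \<in> esd_restrict n r G" "v \<in> F"
  shows "v \<in> esd_vertices n r" "\<forall>j. j \<notin> G \<longrightarrow> v j = 0"
  using assms unfolding esd_restrict_def esd_faces_def supp_carrier_def by auto

lemma prefix_sum_eq_on_support:
  assumes "\<forall>j. j \<notin> G \<longrightarrow> v j = 0" "\<forall>j. j \<notin> G \<longrightarrow> w j = 0"
    and "\<forall>g\<in>G. prefix_sum v g = prefix_sum w g"
  shows "prefix_sum v j = prefix_sum w j"
  by (induction j) (use assms in \<open>(cases "0 \<in> G"; auto), metis prefix_sum_Suc\<close>)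

lemma prefix_sum_Max_support:
  assumes G: "G \<subseteq> {..n}" "G \<noteq> {}" and v: "v \<in> esd_vertices n r" "\<forall>j. j \<notin> G \<longrightarrow> v j = 0"
  shows "prefix_sum v (Max G) = r"
proof -
  have fin: "finite G" using G finite_subset by blast
  have "Max G \<le> n" using G fin by auto
  moreover have "v i = 0" if "i \<in> {..n} - {..Max G}" for i
    using v(2) fin that Max_ge[of G i] by fastforce
  ultimately have "prefix_sum v (Max G) = (\<Sum>k\<le>n. v k)"
    unfolding prefix_sum_def by (intro sum.mono_neutral_left) auto
  then show ?thesis using v(1) unfolding esd_vertices_def by simp
qed

lemma esd_face_prefix_total_less:
  assumes G: "G \<subseteq> {..n}" and F: "F \<in> esd_restrict n r G" and x: "x \<in> F" and y: "y \<in> F"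
    and le: "esd_le n x y" and "x \<noteq> y"
  shows "prefix_total G x < prefix_total G y"
proof -
  have fin: "finite G" using G finite_subset by blast
  have "\<exists>g\<in>G. prefix_sum x g \<noteq> prefix_sum y g"
  proof (rule ccontr)
    assume "\<not> ?thesis"
    then have "prefix_sum x j = prefix_sum y j" for j
      using prefix_sum_eq_on_support esd_restrict_vertex(2)[OF F x] esd_restrict_vertex(2)[OF F y] by blast
    then have "x = y"
      using esd_restrict_vertex(1)[OF F x] esd_restrict_vertex(1)[OF F y]
      by (intro prefix_sum_inject[of n]) (auto simp: esd_vertices_def)
    then show False using \<open>x \<noteq> y\<close> by contradiction
  qed
  then show ?thesis
    using le G fin unfolding prefix_total_def esd_le_def
    by (intro sum_strict_mono_ex1) (auto simp: subset_eq order.strict_iff_order)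
qed

lemma esd_face_prefix_total_span:
  assumes G: "G \<subseteq> {..n}" and F: "F \<in> esd_restrict n r G" and x: "x \<in> F" and y: "y \<in> F"
    and le: "esd_le n x y"
  shows "prefix_total G y \<le> prefix_total G x + (card G - 1)"
proof (cases "G = {}")
  case False
  have fin: "finite G" using G finite_subset by blast
  then have Max: "Max G \<in> G" using False by simp
  \<comment> \<open>at the last index of G both prefix sums equal r; elsewhere they differ by at most one\<close>
  have "prefix_total G y = r + (\<Sum>g\<in>G - {Max G}. prefix_sum y g)"
    unfolding prefix_total_def using fin Max prefix_sum_Max_support[OF G False esd_restrict_vertex[OF F y]]
    by (simp add: sum.remove)
  also have "\<dots> \<le> r + (\<Sum>g\<in>G - {Max G}. prefix_sum x g + 1)"
    using le G unfolding esd_le_def by (intro add_left_mono sum_mono) auto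
  also have "\<dots> = prefix_total G x + (card G - 1)"
    unfolding prefix_total_def using fin Max prefix_sum_Max_support[OF G False esd_restrict_vertex[OF F x]]
    by (simp add: sum.remove sum_Suc)
  finally show ?thesis .
qed (simp add: prefix_total_def)

lemma esd_face_least_vertex:
  assumes G: "G \<subseteq> {..n}" and F: "F \<in> esd_restrict n r G" "F \<noteq> {}"
  obtains x0 where "x0 \<in> F" "\<forall>y\<in>F. esd_le n x0 y"
proof -
  obtain x0 where x0: "x0 \<in> F" "\<forall>y\<in>F. prefix_total G x0 \<le> prefix_total G y"
    using F(2) ex_has_least_nat[of "\<lambda>x. x \<in> F" _ "prefix_total G"] by blast
  have "esd_le n x0 y" if y: "y \<in> F" for y
  proof (cases "y = x0")
    case False
    show ?thesis
    proof (rule ccontr)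
      assume "\<not> esd_le n x0 y"
      then have "esd_le n y x0"
        using esd_faces_esd_le F(1) x0(1) y unfolding esd_restrict_def by blast
      then have "prefix_total G y < prefix_total G x0"
        using esd_face_prefix_total_less[OF G F(1) y x0(1) _ False] by blast
      then show False using x0(2) y by (simp add: leD)
    qed
  qed (simp add: esd_le_def)
  then show ?thesis using that x0(1) by blast
qed

lemma card_esd_face_le:
  assumes G: "G \<subseteq> {..n}" and r: "r > 0" and F: "F \<in> esd_restrict n r G"
  shows "card F \<le> card G"
proof (cases "F = {}")
  case False
  obtain x0 where x0: "x0 \<in> F" "\<forall>y\<in>F. esd_le n x0 y"
    using esd_face_least_vertex[OF G F False] by blast
  have "G \<noteq> {}"
    using esd_restrict_vertex[OF F x0(1)] r unfolding esd_vertices_def by auto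
  have "prefix_total G x0 \<le> prefix_total G y" if "y \<in> F" for y
    using x0 that G unfolding esd_le_def prefix_total_def by (intro sum_mono) auto
  then have sub: "prefix_total G ` F \<subseteq> {prefix_total G x0 .. prefix_total G x0 + (card G - 1)}"
    using esd_face_prefix_total_span[OF G F x0(1)] x0(2) by auto
  have inj: "inj_on (prefix_total G) F"
  proof (rule inj_onI, rule ccontr)
    fix x y assume "x \<in> F" "y \<in> F" "prefix_total G x = prefix_total G y" "x \<noteq> y"
    then show False
      using esd_faces_esd_le F esd_face_prefix_total_less[OF G F] unfolding esd_restrict_def
      by (metis (no_types, lifting) less_irrefl mem_Collect_eq)
  qed
  have "card F = card (prefix_total G ` F)" using card_image[OF inj] by simp
  also have "\<dots> \<le> card {prefix_total G x0 .. prefix_total G x0 + (card G - 1)}"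
    using sub by (intro card_mono) simp_all
  also have "\<dots> = card G"
    using \<open>G \<noteq> {}\<close> G finite_subset[OF G] by (simp add: card_gt_0_iff)
  finally show ?thesis .
qed simp

unbundle fps_syntax

definition multichoose_fps :: "nat \<Rightarrow> int fps" where
  "multichoose_fps k = Abs_fps (\<lambda>s. of_nat ((k + s - 1) choose s))"

lemma one_minus_X_mult_multichoose_fps_Suc:
  "(1 - fps_X) * multichoose_fps (Suc k) = multichoose_fps k"
proof (rule fps_ext)
  fix s
  show "((1 - fps_X) * multichoose_fps (Suc k)) $ s = multichoose_fps k $ s"
  proof (cases s)
    case (Suc s')
    have "(k + Suc s') choose Suc s' = ((k + s') choose s') + ((k + s') choose Suc s')"
      by simp
    then show ?thesis using Suc by (simp add: multichoose_fps_def algebra_simps)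
  qed (simp add: multichoose_fps_def)
qed

lemma one_minus_X_power_mult_multichoose_fps: "(1 - fps_X) ^ k * multichoose_fps k = 1"
proof (induction k)
  case 0
  show ?case by (rule fps_ext) (simp add: multichoose_fps_def)
next
  case (Suc k)
  then show ?case
    by (simp only: power_Suc2 mult.assoc one_minus_X_mult_multichoose_fps_Suc)
qed

lemma nth_X_power_mult_multichoose_fps:
  "(fps_X ^ k * multichoose_fps k) $ t = int (if t < k then 0 else (k + (t - k) - 1) choose (t - k))"
  by (simp add: fps_X_power_mult_nth multichoose_fps_def)

lemma fps_of_poly_one_minus_X: "fps_of_poly [:1, -1:] = (1 - fps_X :: int fps)"
  by (rule fps_ext) (simp add: coeff_pCons split: nat.split)

lemma h_poly_eq_sum_faces:
  assumes "finite \<Omega>" "\<forall>F\<in>\<Omega>. card F \<le> d"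
  shows "h_poly d \<Omega> = (\<Sum>F\<in>\<Omega>. monom 1 (card F) * [:1, -1:] ^ (d - card F))"
proof -
  have "h_poly d \<Omega> = (\<Sum>i\<le>d. \<Sum>F\<in>{F\<in>\<Omega>. card F = i}. monom 1 (card F) * [:1, -1:] ^ (d - card F))"
    unfolding h_poly_def by (intro sum.cong refl) (simp add: mult.assoc)
  also have "\<dots> = (\<Sum>F\<in>\<Omega>. monom 1 (card F) * [:1, -1:] ^ (d - card F))"
    using assms by (intro sum.group) auto
  finally show ?thesis .
qed

lemma face_lattice_points_fps_faces:
  assumes "G \<subseteq> {..n}"
  shows "Abs_fps (\<lambda>t. int (card (face_lattice_points n r G t))) =
         (\<Sum>F\<in>esd_restrict n r G. fps_X ^ card F * multichoose_fps (card F))"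
proof (rule fps_ext)
  fix t
  have "card (face_lattice_points n r G t) = card (face_multisets n r G t)"
    using bij_betw_same_card[OF bij_betw_vertex_sum[OF assms]] by simp
  then show "Abs_fps (\<lambda>t. int (card (face_lattice_points n r G t))) $ t =
      (\<Sum>F\<in>esd_restrict n r G. fps_X ^ card F * multichoose_fps (card F)) $ t"
    by (simp add: fps_sum_nth nth_X_power_mult_multichoose_fps card_face_multisets of_nat_sum)
qed

lemma face_lattice_points_fps_box_vectors:
  assumes G: "G \<subseteq> {..n}" and r: "r > 0"
  shows "Abs_fps (\<lambda>t. int (card (face_lattice_points n r G t))) =
         fps_of_poly (height_poly n r (box_vectors n r G)) * multichoose_fps (card G)"
proof (rule fps_ext)
  fix t
  let ?A = "box_vectors n r G" and ?h = "box_height n r"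
  let ?E = "\<lambda>s. int ((card G + s - 1) choose s)"
  have fin: "finite ?A" using finite_box_vectors G finite_subset by blast
  have "(fps_of_poly (height_poly n r ?A) * multichoose_fps (card G)) $ t
      = (\<Sum>i=0..t. \<Sum>a\<in>?A. (if ?h a = i then 1 else 0) * ?E (t - i))"
    by (simp add: fps_mult_nth height_poly_def multichoose_fps_def coeff_sum coeff_monom
        sum_distrib_right)
  also have "\<dots> = (\<Sum>a\<in>?A. \<Sum>i\<in>{0..t}. if i = ?h a then ?E (t - i) else 0)"
    by (subst sum.swap) (intro sum.cong refl, auto)
  also have "\<dots> = (\<Sum>a\<in>?A. if ?h a \<le> t then ?E (t - ?h a) else 0)"
    by (simp add: sum.delta)
  also have "\<dots> = (\<Sum>a\<in>{a\<in>?A. ?h a \<le> t}. ?E (t - ?h a))"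
    by (rule sum.inter_filter[OF fin, symmetric])
  also have "\<dots> = int (card (face_lattice_points n r G t))"
    by (simp add: card_face_lattice_points[OF G r])
  finally show "Abs_fps (\<lambda>t. int (card (face_lattice_points n r G t))) $ t =
      (fps_of_poly (height_poly n r ?A) * multichoose_fps (card G)) $ t" by simp
qed

lemma h_poly_esd_restrict:
  assumes G: "G \<subseteq> {..n}" and r: "r > 0"
  shows "h_poly (card G) (esd_restrict n r G) = height_poly n r (box_vectors n r G)"
proof -
  let ?\<Omega> = "esd_restrict n r G" and ?d = "card G"
  have bound: "\<forall>F\<in>?\<Omega>. card F \<le> ?d" using card_esd_face_le[OF G r] by blast
  have "fps_of_poly (h_poly ?d ?\<Omega>) = (\<Sum>F\<in>?\<Omega>. fps_X ^ card F * (1 - fps_X) ^ (?d - card F))"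
    unfolding h_poly_eq_sum_faces[OF finite_esd_restrict bound]
    by (simp add: fps_of_poly_sum fps_of_poly_mult fps_of_poly_power fps_of_poly_monom'
        fps_of_poly_one_minus_X)
  \<comment> \<open>multiply each term by (1 - X)^|F| times its inverse\<close>
  also have "\<dots> = (1 - fps_X) ^ ?d * (\<Sum>F\<in>?\<Omega>. fps_X ^ card F * multichoose_fps (card F))"
    unfolding sum_distrib_left
  proof (intro sum.cong refl)
    fix F assume "F \<in> ?\<Omega>"
    then have "(1 - fps_X :: int fps) ^ ?d = (1 - fps_X) ^ (?d - card F) * (1 - fps_X) ^ card F"
      using bound by (simp flip: power_add)
    then have "(1 - fps_X) ^ ?d * (fps_X ^ card F * multichoose_fps (card F)) =
        fps_X ^ card F * (1 - fps_X) ^ (?d - card F) * ((1 - fps_X) ^ card F * multichoose_fps (card F))"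
      by (simp add: algebra_simps)
    then show "fps_X ^ card F * (1 - fps_X) ^ (?d - card F) =
        (1 - fps_X) ^ ?d * (fps_X ^ card F * multichoose_fps (card F))"
      by (simp add: one_minus_X_power_mult_multichoose_fps)
  qed
  also have "\<dots> = fps_of_poly (height_poly n r (box_vectors n r G)) *
      ((1 - fps_X) ^ ?d * multichoose_fps ?d)"
    unfolding face_lattice_points_fps_faces[OF G, symmetric] face_lattice_points_fps_box_vectors[OF G r]
    by (rule mult.left_commute)
  also have "\<dots> = fps_of_poly (height_poly n r (box_vectors n r G))"
    by (simp add: one_minus_X_power_mult_multichoose_fps)
  finally show ?thesis by (simp add: fps_of_poly_eq_iff)
qed

section \<open>The local h-polynomial\<close>

lemma height_poly_box_vectors_eq_sum_open:
  assumes "finite G"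
  shows "height_poly n r (box_vectors n r G) = (\<Sum>T\<in>Pow G. height_poly n r (open_box_vectors n r T))"
proof -
  \<comment> \<open>group the vectors by their support\<close>
  have supports: "(\<lambda>a. {j. a j \<noteq> 0}) ` box_vectors n r G \<subseteq> Pow G"
    unfolding box_vectors_def by auto
  have "height_poly n r (box_vectors n r G) =
      (\<Sum>T\<in>Pow G. \<Sum>a\<in>{a \<in> box_vectors n r G. {j. a j \<noteq> 0} = T}. monom 1 (box_height n r a))"
    unfolding height_poly_def
    by (rule sum.group[symmetric, OF finite_box_vectors[OF assms] _ supports]) (use assms in simp)
  also have "\<dots> = (\<Sum>T\<in>Pow G. height_poly n r (open_box_vectors n r T))"
  proof (rule sum.cong[OF refl])
    fix T assume "T \<in> Pow G"
    then have "{a \<in> box_vectors n r G. {j. a j \<noteq> 0} = T} = open_box_vectors n r T"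
      unfolding open_box_vectors_def box_vectors_def by auto
    then show "(\<Sum>a\<in>{a \<in> box_vectors n r G. {j. a j \<noteq> 0} = T}. monom 1 (box_height n r a)) =
        height_poly n r (open_box_vectors n r T)"
      unfolding height_poly_def by (simp only:)
  qed
  finally show ?thesis .
qed

lemma esd_local_h_eq_height_poly:
  assumes r: "r > 0"
  shows "esd_local_h n r = height_poly n r (open_box_vectors n r {..n})"
proof -
  have "esd_local_h n r = (\<Sum>G\<in>Pow {..n}. (-1) ^ (card {..n} - card G) * height_poly n r (box_vectors n r G))"
    unfolding esd_local_h_def local_h_def atLeast0AtMost
    by (intro sum.cong refl) (simp add: h_poly_esd_restrict[OF _ r])
  also have "\<dots> = height_poly n r (open_box_vectors n r {..n})"
    by (rule inclusion_exclusion_mobius[symmetric]) (simp_all add: height_poly_box_vectors_eq_sum_open)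
  finally show ?thesis .
qed

theorem theorem4p4:
  fixes n r :: nat
  assumes "r \<ge> 1" and "n \<ge> 1"
  shows "lecture_hall_d n (\<lambda>_. r) = (\<Sum>w\<in>smirnoff_words (Suc n) r. monom 1 (des w))
         \<and> esd_local_h n r = lecture_hall_d n (\<lambda>_. r)"
proof -
  have r: "r > 0" using assms(1) by simp
  show ?thesis
    using lecture_hall_d_eq_height_poly[OF r] smirnoff_des_poly_eq_height_poly[of n r]
      esd_local_h_eq_height_poly[OF r]
    by simp
qed

end
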